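(* Given an instance with goods and identical valuations (all agents have the same value function $v$ on items and the same quantile $\tau$) with $m=kn$, the greedy algorithm below returns a balanced allocation of maximum utilitarian social welfare among balanced allocations. Greedy algorithm: set $P\leftarrow M$, $N'\leftarrow N$, and $k_i\leftarrow\min(k,\,k-\lceil\tau_i k\rceil+1)$ for each $i$. While $P\neq\emptyset$: for each $i\in N'$ let $S_i$ be a subset of $P$ of size $k_i$ maximizing $\sum_{g\in S_i}v_i(g)$; let $i^*\in N'$ maximize $v_{i^*}(S_{i^*})$; set $A_{i^*}\leftarrow S_{i^*}$, $P\leftarrow P\setminus A_{i^*}$, $N'\leftarrow N'\setminus\{i^*\}$. Finally allocate any remaining items arbitrarily so that $|A_i|=k$ for all $i\in N$.
   Context: There is a set $N$ of $n$ agents and a set $M$ of $m$ indivisible items. Each agent $i$ has a value $v_i(g)\ge0$ for each item and a quantile $\tau_i\in[0,1]$; here $v_i=v$ and $\tau_i=\tau$ for all $i$. For a nonempty bundle $S\subseteq M$, order its items as $g_1,\dots,g_{|S|}$ with $v_i(g_1)\le\dots\le v_i(g_{|S|})$; then $v_i(S)=v_i(g_{\lceil \tau_i|S|\rceil})$ if $\tau_i>0$ and $v_i(S)=v_i(g_1)$ if $\tau_i=0$. An allocation is an $n$-partition $A=(A_1,\dots,A_n)$ of $M$; when $m=kn$ it is balanced if $|A_i|=k$ for all $i$. $\mathrm{USW}(A)=\sum_{i\in N}v_i(A_i)$. *)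

theory Defs
  imports Complex_Main "HOL-Library.Multiset"
begin

text \<open>Items sorted by value increasingly (as a sorted list of values, a multiset);
  the value of position ceil(tau |S|) (1-based) if tau > 0, else the smallest value.
  The empty bundle (never arising for k >= 1) gets value 0 by convention.\<close>
definition qval :: "('b \<Rightarrow> real) \<Rightarrow> real \<Rightarrow> 'b set \<Rightarrow> real" where
  "qval v \<tau> S =
     (if S = {} then 0
      else (let xs = sorted_list_of_multiset (image_mset v (mset_set S));
                j = (if \<tau> > 0 then nat \<lceil>\<tau> * real (card S)\<rceil> - 1 else 0)
            in xs ! j))"

definition is_allocation :: "'a set \<Rightarrow> 'b set \<Rightarrow> ('a \<Rightarrow> 'b set) \<Rightarrow> bool" where
  "is_allocation N M A \<longleftrightarrow>
     (\<Union>i\<in>N. A i) = M \<and> (\<forall>i\<in>N. \<forall>j\<in>N. i \<noteq> j \<longrightarrow> A i \<inter> A j = {})"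

definition balanced_allocation :: "'a set \<Rightarrow> 'b set \<Rightarrow> nat \<Rightarrow> ('a \<Rightarrow> 'b set) \<Rightarrow> bool" where
  "balanced_allocation N M k A \<longleftrightarrow> is_allocation N M A \<and> (\<forall>i\<in>N. card (A i) = k)"

definition USW :: "'a set \<Rightarrow> ('b \<Rightarrow> real) \<Rightarrow> real \<Rightarrow> ('a \<Rightarrow> 'b set) \<Rightarrow> real" where
  "USW N v \<tau> A = (\<Sum>i\<in>N. qval v \<tau> (A i))"

definition greedy_size :: "nat \<Rightarrow> real \<Rightarrow> nat" where
  "greedy_size k \<tau> = nat (min (int k) (int k - \<lceil>\<tau> * real k\<rceil> + 1))"

text \<open>A run of the greedy algorithm: in round t (t < n) the remaining items are
  M minus the bundles already assigned, the remaining agents are N minus the agents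
  already served; C t i is the candidate bundle S_i computed for agent i in round t,
  and sigma t is the agent i* selected in round t.\<close>
definition greedy_run ::
  "'a set \<Rightarrow> 'b set \<Rightarrow> ('b \<Rightarrow> real) \<Rightarrow> real \<Rightarrow> nat \<Rightarrow>
   (nat \<Rightarrow> 'a \<Rightarrow> 'b set) \<Rightarrow> (nat \<Rightarrow> 'a) \<Rightarrow> ('a \<Rightarrow> 'b set) \<Rightarrow> bool" where
  "greedy_run N M v \<tau> k C \<sigma> A \<longleftrightarrow>
     (let kk = greedy_size k \<tau>;
          P = (\<lambda>t. M - (\<Union>s<t. C s (\<sigma> s)));
          N' = (\<lambda>t. N - \<sigma> ` {..<t})
      in (\<forall>t < card N.
            \<sigma> t \<in> N' t \<and>
            (\<forall>i\<in>N' t. C t i \<subseteq> P t \<and> card (C t i) = kk \<and>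
               (\<forall>S. S \<subseteq> P t \<and> card S = kk \<longrightarrow> (\<Sum>g\<in>S. v g) \<le> (\<Sum>g\<in>C t i. v g))) \<and>
            (\<forall>i\<in>N' t. qval v \<tau> (C t i) \<le> qval v \<tau> (C t (\<sigma> t))) \<and>
            C t (\<sigma> t) \<subseteq> A (\<sigma> t))
         \<and> balanced_allocation N M k A)"

end

theory Submission
  imports Defs
begin

text \<open>Let r = greedy_size k \<tau>. For a bundle of k items, x \<le> qval v \<tau> S holds iff at least r
  items of S are worth at least x. Fix a threshold x and suppose m agents reach x under a
  balanced allocation B; their bundles are disjoint, so at least m r items are worth at least x.
  The first t < m greedy bundles use only t r items, so at least r such items are still
  available in round t, and a sum-maximal r-subset of the remaining items then consists of
  such items only; hence the agent served in round t also reaches x. So for every threshold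
  the greedy allocation has at least as many agents above it as B, which forces
  USW B \<le> USW A.\<close>

lemma le_nth_sorted_iff_length_filter:
  fixes xs :: "'a::linorder list"
  assumes "sorted xs" and "0 < r" and "r \<le> length xs"
  shows "x \<le> xs ! (length xs - r) \<longleftrightarrow> r \<le> length (filter (\<lambda>y. x \<le> y) xs)"
proof -
  let ?L = "length xs"
  let ?I = "{i. i < ?L \<and> x \<le> xs ! i}"
  have len: "length (filter (\<lambda>y. x \<le> y) xs) = card ?I"
    by (rule length_filter_conv_card)
  show ?thesis
  proof
    assume "x \<le> xs ! (?L - r)"
    then have "{?L - r..<?L} \<subseteq> ?I"
      using assms(1) by (auto simp: sorted_iff_nth_mono intro: order_trans)
    then have "card {?L - r..<?L} \<le> card ?I"
      by (intro card_mono) auto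
    then show "r \<le> length (filter (\<lambda>y. x \<le> y) xs)"
      using len assms(3) by simp
  next
    assume r_le: "r \<le> length (filter (\<lambda>y. x \<le> y) xs)"
    show "x \<le> xs ! (?L - r)"
    proof (rule ccontr)
      assume below: "\<not> x \<le> xs ! (?L - r)"
      have "?L - r < i" if "i < ?L" and "x \<le> xs ! i" for i
      proof (rule ccontr)
        assume "\<not> ?L - r < i"
        then have "xs ! i \<le> xs ! (?L - r)"
          using assms by (simp add: sorted_nth_mono)
        then show False
          using below that(2) by simp
      qed
      then have "?I \<subseteq> {?L - r + 1..<?L}"
        by (auto simp: Suc_le_eq)
      then have "card ?I \<le> card {?L - r + 1..<?L}"
        by (intro card_mono) auto
      then show False
        using r_le len assms(2,3) by simp
    qed
  qed
qed

lemma length_filter_sorted_values: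
  assumes "finite S"
  shows "length (filter P (sorted_list_of_multiset (image_mset v (mset_set S)))) =
    card {g\<in>S. P (v g)}"
proof -
  have "length (filter P (sorted_list_of_multiset (image_mset v (mset_set S)))) =
      size (filter_mset P (image_mset v (mset_set S)))"
    by (metis mset_filter mset_sorted_list_of_multiset size_mset)
  also have "\<dots> = card {g\<in>S. P (v g)}"
    using assms by (simp add: filter_mset_image_mset filter_mset_mset_set)
  finally show ?thesis .
qed

lemma greedy_size_pos: "0 < k \<Longrightarrow> \<tau> \<le> 1 \<Longrightarrow> 0 < greedy_size k \<tau>"
  by (simp add: greedy_size_def ceiling_le_iff mult_left_le_one_le)

lemma greedy_size_le: "greedy_size k \<tau> \<le> k"
  by (simp add: greedy_size_def)

lemma qval_index_eq_greedy_size: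
  assumes "0 \<le> \<tau>" and "\<tau> \<le> 1"
  shows "(if \<tau> > 0 then nat \<lceil>\<tau> * real k\<rceil> - 1 else 0) = k - greedy_size k \<tau>"
proof -
  have "0 \<le> \<tau> * real k"
    using assms(1) by simp
  then have "0 \<le> \<lceil>\<tau> * real k\<rceil>"
    by simp
  moreover have "\<lceil>\<tau> * real k\<rceil> \<le> int k"
    using assms by (simp add: ceiling_le_iff mult_left_le_one_le)
  ultimately show ?thesis
    using assms unfolding greedy_size_def by auto
qed

lemma le_qval_iff:
  assumes "finite S" and "card S = k" and "0 < k" and "0 \<le> \<tau>" and "\<tau> \<le> 1"
  shows "x \<le> qval v \<tau> S \<longleftrightarrow> greedy_size k \<tau> \<le> card {g\<in>S. x \<le> v g}"
proof -
  let ?xs = "sorted_list_of_multiset (image_mset v (mset_set S))"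
  have len: "length ?xs = k"
    by (metis assms(2) mset_sorted_list_of_multiset size_mset size_image_mset size_mset_set)
  have "S \<noteq> {}"
    using assms(2,3) by auto
  then have "qval v \<tau> S = ?xs ! (if \<tau> > 0 then nat \<lceil>\<tau> * real k\<rceil> - 1 else 0)"
    using assms(2) by (simp add: qval_def Let_def)
  also have "\<dots> = ?xs ! (length ?xs - greedy_size k \<tau>)"
    by (simp only: qval_index_eq_greedy_size[OF assms(4,5)] len)
  finally show ?thesis
    using le_nth_sorted_iff_length_filter[of ?xs "greedy_size k \<tau>" x]
      greedy_size_pos[OF assms(3,5)] greedy_size_le[of k \<tau>] len
      length_filter_sorted_values[OF assms(1), of "(\<le>) x" v]
    by simp
qed

text \<open>Remove a largest element on each side: the count hypothesis at the left maximum puts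
  it below the right maximum, and the hypothesis survives the removal.\<close>
lemma sum_le_sum_if_upper_counts_le:
  fixes q :: "'i \<Rightarrow> 'r::{linorder, ordered_comm_monoid_add}" and c :: "'j \<Rightarrow> 'r"
  assumes "finite I" and "finite J" and "card I = card J"
    and "\<And>x. card {i\<in>I. x \<le> q i} \<le> card {j\<in>J. x \<le> c j}"
  shows "sum q I \<le> sum c J"
  using assms
proof (induction "card I" arbitrary: I J)
  case 0
  then show ?case by simp
next
  case (Suc n)
  have "I \<noteq> {}" and "J \<noteq> {}"
    using Suc.hyps(2) Suc.prems(3) by auto
  have "Max (q ` I) \<in> q ` I"
    using Suc.prems(1) \<open>I \<noteq> {}\<close> by (intro Max_in) auto
  then obtain i0 where "i0 \<in> I" and "q i0 = Max (q ` I)"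
    by (metis imageE)
  then have i0: "i0 \<in> I" "\<And>i. i \<in> I \<Longrightarrow> q i \<le> q i0"
    using Suc.prems(1) by simp_all
  have "Max (c ` J) \<in> c ` J"
    using Suc.prems(2) \<open>J \<noteq> {}\<close> by (intro Max_in) auto
  then obtain j0 where "j0 \<in> J" and "c j0 = Max (c ` J)"
    by (metis imageE)
  then have j0: "j0 \<in> J" "\<And>j. j \<in> J \<Longrightarrow> c j \<le> c j0"
    using Suc.prems(2) by simp_all
  have "0 < card {i\<in>I. q i0 \<le> q i}"
    using i0(1) Suc.prems(1) by (auto simp: card_gt_0_iff)
  then have "0 < card {j\<in>J. q i0 \<le> c j}"
    using Suc.prems(4)[of "q i0"] by linarith
  then obtain j where "j \<in> J" and "q i0 \<le> c j"
    by (auto simp: card_gt_0_iff)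
  then have max_le: "q i0 \<le> c j0"
    using j0(2) order_trans by blast
  have "sum q (I - {i0}) \<le> sum c (J - {j0})"
  proof (rule Suc.hyps)
    show "n = card (I - {i0})" and "finite (I - {i0})" and "finite (J - {j0})"
      and "card (I - {i0}) = card (J - {j0})"
      using Suc.hyps(2) Suc.prems(1-3) i0(1) j0(1) by auto
    fix x
    show "card {i \<in> I - {i0}. x \<le> q i} \<le> card {j \<in> J - {j0}. x \<le> c j}"
    proof (cases "x \<le> q i0")
      case True
      have "{i \<in> I - {i0}. x \<le> q i} = {i\<in>I. x \<le> q i} - {i0}"
        and "{j \<in> J - {j0}. x \<le> c j} = {j\<in>J. x \<le> c j} - {j0}"
        by auto
      moreover have "i0 \<in> {i\<in>I. x \<le> q i}" and "j0 \<in> {j\<in>J. x \<le> c j}"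
        using True order_trans[OF True max_le] i0(1) j0(1) by simp_all
      ultimately show ?thesis
        using Suc.prems(1,2) Suc.prems(4)[of x] by simp
    next
      case False
      have "\<not> x \<le> q i" if "i \<in> I" for i
        using False order_trans[OF _ i0(2)[OF that]] by blast
      then have "{i \<in> I - {i0}. x \<le> q i} = {}"
        by blast
      then show ?thesis
        by (metis card.empty zero_le)
    qed
  qed
  then have "q i0 + sum q (I - {i0}) \<le> c j0 + sum c (J - {j0})"
    using max_le by (rule add_mono[rotated])
  then show ?case
    using Suc.prems(1,2) i0(1) j0(1) by (simp add: sum.remove)
qed

text \<open>An item below the threshold could be swapped for an unused item above it,
  increasing the sum.\<close>
lemma max_sum_subset_above_threshold:
  fixes v :: "'b \<Rightarrow> 'r::linordered_ab_group_add"
  assumes "finite P" and "S \<subseteq> P" and "card S \<le> card {g\<in>P. x \<le> v g}"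
    and max: "\<And>T. T \<subseteq> P \<Longrightarrow> card T = card S \<Longrightarrow> sum v T \<le> sum v S"
    and "g \<in> S"
  shows "x \<le> v g"
proof (rule ccontr)
  assume "\<not> x \<le> v g"
  then have low: "v g < x" by simp
  have fin: "finite S"
    using assms(2,1) by (rule finite_subset)
  have "\<not> {h\<in>P. x \<le> v h} \<subseteq> S"
  proof
    assume "{h\<in>P. x \<le> v h} \<subseteq> S"
    moreover have "g \<notin> {h\<in>P. x \<le> v h}"
      using low by (simp add: not_le)
    ultimately have "{h\<in>P. x \<le> v h} \<subset> S"
      using \<open>g \<in> S\<close> by blast
    then have "card {h\<in>P. x \<le> v h} < card S"
      by (rule psubset_card_mono[OF fin])
    then show False
      using assms(3) by simp
  qed
  then obtain h where h: "h \<in> P" "x \<le> v h" "h \<notin> S" by auto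
  define T where "T = insert h (S - {g})"
  have "0 < card S"
    using fin \<open>g \<in> S\<close> card_gt_0_iff by blast
  then have "T \<subseteq> P" and "card T = card S"
    using assms(2,5) h fin by (auto simp: T_def)
  then have "sum v T \<le> sum v S"
    by (rule max)
  moreover have "sum v T = v h + (sum v S - v g)"
    using h(3) fin \<open>g \<in> S\<close> by (simp add: T_def sum_diff1)
  ultimately show False
    using low h(2) by simp
qed

lemma mult_le_card_if_disjoint_subsets:
  assumes "finite H" and "finite I"
    and "\<And>i. i \<in> I \<Longrightarrow> F i \<subseteq> H" and "\<And>i. i \<in> I \<Longrightarrow> r \<le> card (F i)"
    and "\<And>i j. i \<in> I \<Longrightarrow> j \<in> I \<Longrightarrow> i \<noteq> j \<Longrightarrow> F i \<inter> F j = {}"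
  shows "card I * r \<le> card H"
proof -
  have "card I * r = (\<Sum>i\<in>I. r)"
    by simp
  also have "\<dots> \<le> (\<Sum>i\<in>I. card (F i))"
    using assms(4) by (rule sum_mono)
  also have "\<dots> = card (\<Union>i\<in>I. F i)"
    using assms(1-3,5) by (intro card_UN_disjoint[symmetric]) (auto intro: finite_subset)
  also have "\<dots> \<le> card H"
    using assms(1,3) by (intro card_mono) auto
  finally show ?thesis .
qed

lemma greedy_run_balanced:
  "greedy_run N M v \<tau> k C \<sigma> A \<Longrightarrow> balanced_allocation N M k A"
  by (simp add: greedy_run_def Let_def)

lemma greedy_run_roundD:
  assumes "greedy_run N M v \<tau> k C \<sigma> A" and "t < card N"
  shows "\<sigma> t \<in> N - \<sigma> ` {..<t}"
    and "C t (\<sigma> t) \<subseteq> M - (\<Union>s<t. C s (\<sigma> s))"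
    and "card (C t (\<sigma> t)) = greedy_size k \<tau>"
    and "S \<subseteq> M - (\<Union>s<t. C s (\<sigma> s)) \<Longrightarrow> card S = greedy_size k \<tau> \<Longrightarrow>
      (\<Sum>g\<in>S. v g) \<le> (\<Sum>g\<in>C t (\<sigma> t). v g)"
    and "C t (\<sigma> t) \<subseteq> A (\<sigma> t)"
  using assms by (simp_all add: greedy_run_def Let_def)

lemma greedy_run_bij_betw:
  assumes "finite N" and "greedy_run N M v \<tau> k C \<sigma> A"
  shows "bij_betw \<sigma> {..<card N} N"
proof -
  have new: "\<sigma> t \<in> N - \<sigma> ` {..<t}" if "t < card N" for t
    using assms(2) that by (rule greedy_run_roundD(1))
  have "inj_on \<sigma> {..<card N}"
  proof (rule inj_onI)
    fix s t
    assume "s \<in> {..<card N}" and "t \<in> {..<card N}" and "\<sigma> s = \<sigma> t"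
    then show "s = t"
      using new[of s] new[of t] by (metis DiffE imageI lessThan_iff linorder_neqE_nat)
  qed
  moreover have "\<sigma> ` {..<card N} \<subseteq> N"
    using new by blast
  ultimately show ?thesis
    using assms(1) by (simp add: bij_betw_def card_image card_subset_eq)
qed

text \<open>The first t greedy bundles use at most t r items, so if (t + 1) r items are worth at
  least x, at least r of them are still available in round t.\<close>
lemma greedy_bundle_above_threshold:
  assumes "finite M" and run: "greedy_run N M v \<tau> k C \<sigma> A" and "t < card N"
    and "Suc t * greedy_size k \<tau> \<le> card {g\<in>M. x \<le> v g}"
    and "g \<in> C t (\<sigma> t)"
  shows "x \<le> v g"
proof -
  let ?r = "greedy_size k \<tau>"
  let ?H = "{g\<in>M. x \<le> v g}"
  define U where "U = (\<Union>s<t. C s (\<sigma> s))"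
  have earlier: "C s (\<sigma> s) \<subseteq> M" "card (C s (\<sigma> s)) = ?r" if "s < t" for s
    using greedy_run_roundD(2,3)[OF run, of s] that assms(3) by auto
  have "card U \<le> (\<Sum>s<t. card (C s (\<sigma> s)))"
    unfolding U_def by (rule card_UN_le) simp
  also have "\<dots> = t * ?r"
    using earlier(2) by simp
  finally have "card U \<le> t * ?r" .
  moreover have "finite U"
    using earlier(1) assms(1) unfolding U_def by (meson UN_least finite_subset lessThan_iff)
  then have "card ?H - card U \<le> card (?H - U)"
    by (rule diff_card_le_card_Diff)
  moreover have "?H - U = {g\<in>M - U. x \<le> v g}"
    by blast
  ultimately have "?r \<le> card {g\<in>M - U. x \<le> v g}"
    using assms(4) by simp
  show ?thesis
  proof (rule max_sum_subset_above_threshold[of "M - U" "C t (\<sigma> t)"])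
    show "finite (M - U)"
      using assms(1) by simp
    show "C t (\<sigma> t) \<subseteq> M - U"
      using greedy_run_roundD(2)[OF run assms(3)] by (simp add: U_def)
    show "card (C t (\<sigma> t)) \<le> card {g\<in>M - U. x \<le> v g}"
      using greedy_run_roundD(3)[OF run assms(3)] \<open>?r \<le> _\<close> by simp
    show "sum v T \<le> sum v (C t (\<sigma> t))" if "T \<subseteq> M - U" and "card T = card (C t (\<sigma> t))" for T
      using greedy_run_roundD(3,4)[OF run assms(3)] that by (simp add: U_def)
  qed (rule assms(5))
qed

lemma greedy_run_upper_count_ge:
  assumes "finite N" and "finite M" and "0 < k" and "0 \<le> \<tau>" and "\<tau> \<le> 1"
    and run: "greedy_run N M v \<tau> k C \<sigma> A" and B: "balanced_allocation N M k B"
  shows "card {i\<in>N. x \<le> qval v \<tau> (B i)} \<le> card {t\<in>{..<card N}. x \<le> qval v \<tau> (A (\<sigma> t))}"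
proof -
  let ?r = "greedy_size k \<tau>"
  let ?I = "{i\<in>N. x \<le> qval v \<tau> (B i)}"
  have B_sub: "B i \<subseteq> M" and B_card: "card (B i) = k" if "i \<in> N" for i
    using B that by (auto simp: balanced_allocation_def is_allocation_def)
  have B_disj: "B i \<inter> B j = {}" if "i \<in> N" and "j \<in> N" and "i \<noteq> j" for i j
    using B that by (auto simp: balanced_allocation_def is_allocation_def)
  have "?r \<le> card {g\<in>B i. x \<le> v g}" if "i \<in> ?I" for i
  proof -
    from that have "i \<in> N" and "x \<le> qval v \<tau> (B i)"
      by auto
    moreover have "finite (B i)"
      using B_sub[OF \<open>i \<in> N\<close>] assms(2) by (rule finite_subset)
    ultimately show ?thesis
      using le_qval_iff[OF _ B_card assms(3-5)] by blast
  qed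
  moreover have "finite {g\<in>M. x \<le> v g}" and "finite ?I"
    using assms(1,2) by simp_all
  ultimately have high: "card ?I * ?r \<le> card {g\<in>M. x \<le> v g}"
    using B_sub B_disj
    by (intro mult_le_card_if_disjoint_subsets[where F = "\<lambda>i. {g\<in>B i. x \<le> v g}"]) blast+
  have "card ?I \<le> card N"
    using assms(1) by (intro card_mono) auto
  have "x \<le> qval v \<tau> (A (\<sigma> t))" if "t < card ?I" for t
  proof -
    have t: "t < card N"
      using that \<open>card ?I \<le> card N\<close> by simp
    have "\<sigma> t \<in> N"
      using greedy_run_roundD(1)[OF run t] by blast
    then have A_sub: "A (\<sigma> t) \<subseteq> M" and A_card: "card (A (\<sigma> t)) = k"
      using greedy_run_balanced[OF run] by (auto simp: balanced_allocation_def is_allocation_def)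
    have A_fin: "finite (A (\<sigma> t))"
      using A_sub assms(2) by (rule finite_subset)
    have "Suc t * ?r \<le> card ?I * ?r"
      using Suc_leI[OF that] by (rule mult_le_mono1)
    then have "x \<le> v g" if "g \<in> C t (\<sigma> t)" for g
      using greedy_bundle_above_threshold[OF assms(2) run t _ that] high by (meson le_trans)
    then have "C t (\<sigma> t) \<subseteq> {g\<in>A (\<sigma> t). x \<le> v g}"
      using greedy_run_roundD(5)[OF run t] by blast
    then have "card (C t (\<sigma> t)) \<le> card {g\<in>A (\<sigma> t). x \<le> v g}"
      using A_fin by (intro card_mono) simp_all
    then show ?thesis
      using le_qval_iff[OF A_fin A_card assms(3-5)] greedy_run_roundD(3)[OF run t] by simp
  qed
  then have "{..<card ?I} \<subseteq> {t\<in>{..<card N}. x \<le> qval v \<tau> (A (\<sigma> t))}"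
    using \<open>card ?I \<le> card N\<close> by auto
  then have "card {..<card ?I} \<le> card {t\<in>{..<card N}. x \<le> qval v \<tau> (A (\<sigma> t))}"
    by (intro card_mono) simp_all
  then show ?thesis
    by simp
qed

theorem theorem11:
  fixes N :: "'a set" and M :: "'b set" and v :: "'b \<Rightarrow> real" and \<tau> :: real
    and n k :: nat
    and C :: "nat \<Rightarrow> 'a \<Rightarrow> 'b set" and \<sigma> :: "nat \<Rightarrow> 'a" and A :: "'a \<Rightarrow> 'b set"
  assumes "finite N" and "card N = n"
    and "finite M" and "card M = k * n"
    and "\<forall>g\<in>M. v g \<ge> 0"
    and "0 \<le> \<tau>" and "\<tau> \<le> 1"
    and "greedy_run N M v \<tau> k C \<sigma> A"
  shows "balanced_allocation N M k A \<and>
         (\<forall>B. balanced_allocation N M k B \<longrightarrow> USW N v \<tau> B \<le> USW N v \<tau> A)"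
proof (intro conjI allI impI)
  show A: "balanced_allocation N M k A"
    using assms(8) by (rule greedy_run_balanced)
  fix B
  assume B: "balanced_allocation N M k B"
  show "USW N v \<tau> B \<le> USW N v \<tau> A"
  proof (cases "k = 0")
    case True
    then have "M = {}"
      using assms(3,4) by simp
    then have "B i = {}" and "A i = {}" if "i \<in> N" for i
      using A B that by (auto simp: balanced_allocation_def is_allocation_def)
    then show ?thesis
      by (simp add: USW_def qval_def)
  next
    case False
    have "USW N v \<tau> B \<le> (\<Sum>t<card N. qval v \<tau> (A (\<sigma> t)))"
      unfolding USW_def
    proof (rule sum_le_sum_if_upper_counts_le)
      fix x
      show "card {i\<in>N. x \<le> qval v \<tau> (B i)} \<le> card {t\<in>{..<card N}. x \<le> qval v \<tau> (A (\<sigma> t))}"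
        using greedy_run_upper_count_ge[OF assms(1,3) _ assms(6-8) B] False by simp
    qed (use assms(1) in simp_all)
    also have "\<dots> = USW N v \<tau> A"
      unfolding USW_def using greedy_run_bij_betw[OF assms(1,8)] by (rule sum.reindex_bij_betw)
    finally show ?thesis .
  qed
qed

end
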